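(* Let $E$ be a regular biordered set satisfying: (E1) there exists $0\in E$ with $0\,\omega\,e$ for every $e\in E$; (E2) there is a map $e\mapsto e'$ on $E$ such that for all $e,f\in E$: (i) $(e')'=e$; (ii) $f\,\omega^l\,e$ iff $e'\,\omega^r\,f'$; (iii) $f\,\omega^l\,e'$ iff $M(f,e)=\{0\}$. Let $S$ be a regular semigroup generated by its idempotents whose biordered set of idempotents is $E$. Then for each $e\in E$, $\{x\in S: xe=0\}=Se'$ and $\{x\in S: ex=0\}=e'S$.
   Context: For a semigroup $S$, its biordered set is the set of idempotents with product $ef$ (computed in $S$) defined when $\{ef,fe\}\cap\{e,f\}\ne\emptyset$. A semigroup is regular if for every $x$ there is $y$ with $xyx=x$; a regular biordered set is one isomorphic to the biordered set of some regular semigroup. In $E$: $\omega^l=\{(e,f): ef=e\}$, $\omega^r=\{(e,f): fe=e\}$, $\omega=\omega^l\cap\omega^r$, $M(e,f)=\{g\in E: g\,\omega^l\,e,\ g\,\omega^r\,f\}$. Here $0$ denotes the element of $E$ given by (E1). *)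

theory Defs
  imports Main
begin

text \<open>The semigroup S is the ambient type of class semigroup_mult (S = UNIV).\<close>

definition idems :: "'a::semigroup_mult set" where
  "idems = {e. e * e = e}"

definition omega_l :: "'a::semigroup_mult \<Rightarrow> 'a \<Rightarrow> bool" where
  "omega_l e f \<longleftrightarrow> e * f = e"

definition omega_r :: "'a::semigroup_mult \<Rightarrow> 'a \<Rightarrow> bool" where
  "omega_r e f \<longleftrightarrow> f * e = e"

definition omega :: "'a::semigroup_mult \<Rightarrow> 'a \<Rightarrow> bool" where
  "omega e f \<longleftrightarrow> omega_l e f \<and> omega_r e f"

definition MSet :: "'a::semigroup_mult \<Rightarrow> 'a \<Rightarrow> 'a set" where
  "MSet e f = {g \<in> idems. omega_l g e \<and> omega_r g f}"

definition regular_semigroup :: "'a::semigroup_mult itself \<Rightarrow> bool" where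
  "regular_semigroup _ \<longleftrightarrow> (\<forall>x::'a. \<exists>y. x * y * x = x)"

inductive idem_generated :: "'a::semigroup_mult \<Rightarrow> bool" where
  base: "e \<in> idems \<Longrightarrow> idem_generated e"
| prod: "idem_generated x \<Longrightarrow> idem_generated y \<Longrightarrow> idem_generated (x * y)"

end

theory Submission
  imports Defs
begin

text \<open>Since S is generated by idempotents, the element 0 of (E1) is a zero of S. In a regular
  semigroup with zero, M(f,e) = {0} holds exactly when fe = 0: a sandwich element h of M(f,e)
  satisfies fe = fhe, and conversely every g in M(f,e) equals g(fe)g. Thus (E2)(iii) says that
  fe' = f for every idempotent f with fe = 0, and e'e = 0. Writing x = x(yx) with yx idempotent
  and (yx)e = 0 whenever xe = 0 gives x = (xyx)e', i.e. x lies in Se'; the right-hand version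
  uses (E2)(ii) to move e' to the left.\<close>

lemma idem_generated_absorbs_zero:
  fixes z :: "'a::semigroup_mult"
  assumes "idem_generated x" and zero: "\<forall>f\<in>idems. omega z f"
  shows "z * x = z \<and> x * z = z"
  using assms(1)
proof (induction x rule: idem_generated.induct)
  case (base f)
  then show ?case using zero by (auto simp: omega_def omega_l_def omega_r_def)
next
  case (prod x y)
  then show ?case by (metis mult.assoc)
qed

lemma regular_semigroup_inverse:
  fixes x :: "'a::semigroup_mult"
  assumes "regular_semigroup TYPE('a)"
  obtains y where "x * y * x = x" and "y * x * y = y"
proof -
  obtain y where y: "x * y * x = x" using assms unfolding regular_semigroup_def by blast
  show thesis
  proof
    show "x * (y * x * y) * x = x" using y by (metis mult.assoc)
    show "y * x * y * x * (y * x * y) = y * x * y" using y by (metis mult.assoc)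
  qed
qed

lemma regular_semigroup_sandwich_element:
  fixes a b :: "'a::semigroup_mult"
  assumes "regular_semigroup TYPE('a)" and "a \<in> idems" and "b \<in> idems"
  obtains h where "h \<in> MSet a b" and "a * b = a * h * b"
proof -
  obtain y where y: "a * b * y * (a * b) = a * b" "y * (a * b) * y = y"
    using regular_semigroup_inverse[OF assms(1)] by blast
  have a: "a * a = a" and b: "b * b = b" using assms(2,3) by (simp_all add: idems_def)
  define h where "h = b * y * a"
  show thesis
  proof
    have "h * h = h" unfolding h_def using y(2) by (metis mult.assoc)
    moreover have "h * a = h" "b * h = h" unfolding h_def using a b by (metis mult.assoc)+
    ultimately show "h \<in> MSet a b" by (simp add: MSet_def idems_def omega_l_def omega_r_def)
    show "a * b = a * h * b" unfolding h_def using y(1) a b by (metis mult.assoc)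
  qed
qed

lemma MSet_eq_zero_iff:
  fixes z :: "'a::semigroup_mult"
  assumes reg: "regular_semigroup TYPE('a)" and zero: "\<forall>x. z * x = z \<and> x * z = z"
    and a: "a \<in> idems" and b: "b \<in> idems"
  shows "MSet a b = {z} \<longleftrightarrow> a * b = z"
proof
  assume "MSet a b = {z}"
  moreover obtain h where "h \<in> MSet a b" and "a * b = a * h * b"
    using regular_semigroup_sandwich_element[OF reg a b] by blast
  ultimately show "a * b = z" using zero by simp
next
  assume ab: "a * b = z"
  have "g = z" if "g \<in> MSet a b" for g
  proof -
    have "g * g = g" "g * a = g" "b * g = g"
      using that by (simp_all add: MSet_def idems_def omega_l_def omega_r_def)
    then have "g = g * (a * b) * g" by (metis mult.assoc)
    then show "g = z" using ab zero by simp
  qed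
  moreover have "z \<in> MSet a b" using zero by (simp add: MSet_def idems_def omega_l_def omega_r_def)
  ultimately show "MSet a b = {z}" by blast
qed

lemma left_annihilator_eq_principal_left_ideal:
  fixes z :: "'a::semigroup_mult"
  assumes reg: "regular_semigroup TYPE('a)" and zero: "\<forall>x. z * x = z \<and> x * z = z"
    and annihilates: "e' * e = z"
    and identity: "\<forall>f\<in>idems. f * e = z \<longrightarrow> f * e' = f"
  shows "{x. x * e = z} = {x * e' | x. True}"
proof (intro equalityI subsetI)
  fix x assume "x \<in> {x. x * e = z}"
  then have xe: "x * e = z" by simp
  obtain y where y: "x * y * x = x" using reg unfolding regular_semigroup_def by blast
  have "y * x \<in> idems" using y by (simp add: idems_def) (metis mult.assoc)
  moreover have "y * x * e = z" using xe zero by (simp add: mult.assoc)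
  ultimately have "y * x * e' = y * x" using identity by blast
  then have "x = x * y * x * e'" using y by (metis mult.assoc)
  then show "x \<in> {x * e' | x. True}" by blast
next
  fix x assume "x \<in> {x * e' | x. True}"
  then show "x \<in> {x. x * e = z}" using annihilates zero by (auto simp: mult.assoc)
qed

lemma right_annihilator_eq_principal_right_ideal:
  fixes z :: "'a::semigroup_mult"
  assumes reg: "regular_semigroup TYPE('a)" and zero: "\<forall>x. z * x = z \<and> x * z = z"
    and annihilates: "e * e' = z"
    and identity: "\<forall>f\<in>idems. e * f = z \<longrightarrow> e' * f = f"
  shows "{x. e * x = z} = {e' * x | x. True}"
proof (intro equalityI subsetI)
  fix x assume "x \<in> {x. e * x = z}"
  then have ex: "e * x = z" by simp
  obtain y where y: "x * y * x = x" using reg unfolding regular_semigroup_def by blast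
  have "x * y \<in> idems" using y by (simp add: idems_def) (metis mult.assoc)
  moreover have "e * (x * y) = z" using ex zero by (simp add: mult.assoc[symmetric])
  ultimately have "e' * (x * y) = x * y" using identity by blast
  then have "x = e' * (x * y * x)" using y by (metis mult.assoc)
  then show "x \<in> {e' * x | x. True}" by blast
next
  fix x assume "x \<in> {e' * x | x. True}"
  then show "x \<in> {x. e * x = z}" using annihilates zero by (auto simp: mult.assoc[symmetric])
qed

theorem lemma3p3:
  fixes z :: "'a::semigroup_mult" and c :: "'a \<Rightarrow> 'a" and e :: 'a
  assumes reg: "regular_semigroup TYPE('a)"
    and gen: "\<forall>x::'a. idem_generated x"
    and E1: "z \<in> idems" "\<forall>f\<in>idems. omega z f"
    and E2_closed: "\<forall>f\<in>idems. c f \<in> idems"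
    and E2i: "\<forall>f\<in>idems. c (c f) = f"
    and E2ii: "\<forall>f\<in>idems. \<forall>g\<in>idems. omega_l g f \<longleftrightarrow> omega_r (c f) (c g)"
    and E2iii: "\<forall>f\<in>idems. \<forall>g\<in>idems. omega_l g (c f) \<longleftrightarrow> MSet g f = {z}"
    and e: "e \<in> idems"
  shows "{x. x * e = z} = {x * c e | x. True} \<and> {x. e * x = z} = {c e * x | x. True}"
proof
  have zero: "\<forall>x. z * x = z \<and> x * z = z"
    using idem_generated_absorbs_zero gen E1(2) by blast
  have E2iii_zero: "g * c f = g \<longleftrightarrow> g * f = z" if "f \<in> idems" "g \<in> idems" for f g
    using E2iii MSet_eq_zero_iff[OF reg zero] that by (simp add: omega_l_def)
  have ce: "c e \<in> idems" using E2_closed e by blast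
  show "{x. x * e = z} = {x * c e | x. True}"
  proof (rule left_annihilator_eq_principal_left_ideal[OF reg zero])
    show "c e * e = z" using E2iii_zero[OF e ce] ce by (simp add: idems_def)
    show "\<forall>f\<in>idems. f * e = z \<longrightarrow> f * c e = f" using E2iii_zero e by blast
  qed
  show "{x. e * x = z} = {c e * x | x. True}"
  proof (rule right_annihilator_eq_principal_right_ideal[OF reg zero])
    show "e * c e = z" using E2iii_zero[OF ce e] E2i e by (simp add: idems_def)
    have "c e * f = f" if "f \<in> idems" "e * f = z" for f
    proof -
      have "omega_l e (c f)" using E2iii_zero[OF that(1) e] that(2) by (simp add: omega_l_def)
      then show "c e * f = f" using E2ii E2_closed E2i e that(1) by (simp add: omega_r_def)
    qed
    then show "\<forall>f\<in>idems. e * f = z \<longrightarrow> c e * f = f" by blast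
  qed
qed

end
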